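(* If $\alpha$ is a non-zero rational number other than $\pm1$, then $M_\infty(\alpha)$ equals the largest prime dividing the numerator or the denominator of $\alpha$ (written in lowest terms).
   Context: For a non-zero algebraic number $\gamma$ with minimal polynomial $A\prod_{n=1}^N(x-\gamma_n)$ over $\mathbb Z$ (primitive, $A>0$), $M(\gamma)=A\prod_{n=1}^N\max\{1,|\gamma_n|\}$. The ultrametric Mahler measure is $M_\infty(\alpha)=\inf\{\max_{1\le n\le N}M(\alpha_n): N\in\mathbb N,\ \alpha_n\in\overline{\mathbb Q}^\times,\ \alpha=\alpha_1\cdots\alpha_N\}$. *)

theory Defs
  imports "HOL-Computational_Algebra.Computational_Algebra"
begin

definition min_int_poly :: "complex \<Rightarrow> int poly" where
  "min_int_poly g = (THE p. irreducible p \<and> lead_coeff p > 0 \<and>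
      poly (map_poly of_int p) g = 0)"

definition mahler_poly :: "int poly \<Rightarrow> real" where
  "mahler_poly p = real_of_int \<bar>lead_coeff p\<bar> *
     (\<Prod>z\<in>{z. poly (map_poly of_int p) z = 0}.
        max 1 (cmod z) ^ order z (map_poly of_int p :: complex poly))"

definition mahler :: "complex \<Rightarrow> real" where
  "mahler g = mahler_poly (min_int_poly g)"

definition mahler_ultra :: "complex \<Rightarrow> real" where
  "mahler_ultra a = Inf {Max (mahler ` set xs) | xs. xs \<noteq> [] \<and>
      (\<forall>x\<in>set xs. algebraic x \<and> x \<noteq> 0) \<and> prod_list xs = a}"

end

theory Submission
  imports Defs "Jordan_Normal_Form.Char_Poly"
begin

text \<open>Let \<open>a/b\<close> be in lowest terms and \<open>a/b = x\<^sub>1 \<cdots> x\<^sub>N\<close> with nonzero algebraic \<open>x\<^sub>i\<close>.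
  Since \<open>lc(f)\<cdot>x\<close> is an algebraic integer whenever \<open>f(x) = 0\<close>, the rational number
  \<open>(\<Prod>\<^sub>i lc(f\<^sub>i)) \<cdot> a/b\<close> is an algebraic integer, hence an integer, where \<open>f\<^sub>i\<close> is the
  minimal polynomial of \<open>x\<^sub>i\<close>; so \<open>b\<close> divides the product of the leading coefficients.
  Applied to the inverses \<open>1/x\<^sub>i\<close> and the reflected polynomials, the same argument shows that
  \<open>a\<close> divides the product of the constant coefficients. Hence every prime dividing \<open>a\<close> or \<open>b\<close>
  divides a leading or a constant coefficient of some \<open>f\<^sub>i\<close>, and both are bounded by
  \<open>M(x\<^sub>i)\<close>. Conversely, writing \<open>a/b\<close> as a product of \<open>\<plusminus>1\<close>, primes and inverses of primes
  attains the largest such prime, since \<open>M(p) = M(1/p) = p\<close>.\<close>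

section \<open>Minimal polynomials over the integers\<close>

abbreviation ipoly :: "int poly \<Rightarrow> complex \<Rightarrow> complex" where
  "ipoly f x \<equiv> poly (map_poly of_int f) x"

lemma degree_pos_if_ipoly_root:
  assumes "f \<noteq> 0" "ipoly f x = 0"
  shows "degree f \<ge> 1"
  using assms by (cases "degree f = 0") (auto elim!: degree_eq_zeroE)

lemma normalize_int_poly_eq_self_iff:
  "normalize (p :: int poly) = p \<longleftrightarrow> p = 0 \<or> lead_coeff p > 0"
proof -
  have "unit_factor p = [:sgn (lead_coeff p):]" by (simp add: unit_factor_poly_def)
  then show ?thesis
    using normalize_idem_imp_unit_factor_eq[of p] unit_factor_mult_normalize[of p]
    by (cases "p = 0") (auto simp: sgn_if one_pCons split: if_splits)
qed

lemma ipoly_normalize_eq_0_iff: "ipoly (normalize f) x = 0 \<longleftrightarrow> ipoly f x = 0"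
proof -
  have "ipoly f x = ipoly (unit_factor f) x * ipoly (normalize f) x"
    by (metis unit_factor_mult_normalize of_int_poly_hom.hom_mult poly_mult)
  moreover have "ipoly (unit_factor f) x \<noteq> 0" if "f \<noteq> 0"
    using that by (simp add: unit_factor_poly_def sgn_if)
  ultimately show ?thesis by (cases "f = 0") auto
qed

lemma ipoly_prod_mset_eq_0_iff: "ipoly (prod_mset A) x = 0 \<longleftrightarrow> (\<exists>p\<in>#A. ipoly p x = 0)"
  by (induction A) (simp_all add: of_int_poly_hom.hom_mult)

lemma min_degree_root_poly_dvd_smult:
  assumes r: "r \<noteq> 0" and r_min: "\<And>s. s \<noteq> 0 \<Longrightarrow> ipoly s x = 0 \<Longrightarrow> degree r \<le> degree s"
    and s: "ipoly s x = 0" and "ipoly r x = 0"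
  shows "\<exists>a Q. a \<noteq> 0 \<and> Polynomial.smult a s = r * Q"
proof -
  obtain a Q where aQ: "a \<noteq> 0" "Polynomial.smult a s = r * Q + pseudo_mod s r"
    and deg: "pseudo_mod s r = 0 \<or> degree (pseudo_mod s r) < degree r"
    using pseudo_mod[OF r] by blast
  have "ipoly (pseudo_mod s r) x = 0"
    using arg_cong[OF aQ(2), of "\<lambda>p. ipoly p x"] s \<open>ipoly r x = 0\<close> by (simp add: hom_distribs)
  with r_min deg have "pseudo_mod s r = 0" by force
  with aQ show ?thesis by auto
qed

lemma irreducible_dvd_min_degree_root_poly:
  assumes r: "r \<noteq> 0" "ipoly r x = 0"
    and r_min: "\<And>s. s \<noteq> 0 \<Longrightarrow> ipoly s x = 0 \<Longrightarrow> degree r \<le> degree s"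
    and p: "irreducible p" "ipoly p x = 0"
  shows "p dvd r"
proof -
  obtain a Q where aQ: "a \<noteq> 0" "Polynomial.smult a p = r * Q"
    using min_degree_root_poly_dvd_smult[OF r(1) r_min p(2) r(2)] by blast
  have "prime_elem p" using p(1) by (simp add: prime_elem_iff_irreducible)
  moreover have "p dvd r * Q" by (metis aQ(2) dvd_smult dvd_refl)
  moreover have "\<not> p dvd Q"
  proof
    assume "p dvd Q"
    then obtain Q' where "Q = p * Q'" ..
    with aQ(2) have "[:a:] * p = (r * Q') * p" by (simp add: algebra_simps)
    moreover have "p \<noteq> 0" using p(1) by auto
    ultimately have rQ': "r * Q' = [:a:]" by (metis mult_cancel_right)
    with aQ(1) have "Q' \<noteq> 0" by auto
    moreover have "degree (r * Q') = 0" by (simp add: rQ')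
    ultimately have "degree r = 0" using r(1) by (simp add: degree_mult_eq)
    with degree_pos_if_ipoly_root[OF r] show False by simp
  qed
  ultimately show ?thesis by (auto simp: prime_elem_dvd_mult_iff)
qed

lemma irreducible_dvd_if_common_root:
  assumes "algebraic x" and p: "irreducible p" "ipoly p x = 0" and q: "ipoly q x = 0"
  shows "p dvd q"
proof -
  obtain f where "f \<noteq> 0 \<and> ipoly f x = 0"
    using assms(1) by (elim algebraicE') auto
  from ex_has_least_nat[of "\<lambda>f. f \<noteq> 0 \<and> ipoly f x = 0", OF this, of degree]
  obtain r where r: "r \<noteq> 0" "ipoly r x = 0"
    and r_min: "\<And>s. s \<noteq> 0 \<Longrightarrow> ipoly s x = 0 \<Longrightarrow> degree r \<le> degree s"
    by blast
  obtain a Q where aQ: "a \<noteq> 0" "Polynomial.smult a q = r * Q"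
    using min_degree_root_poly_dvd_smult[OF r(1) r_min q r(2)] by blast
  have "p dvd [:a:] * q"
    using irreducible_dvd_min_degree_root_poly[OF r r_min p] aQ(2) by simp
  moreover have "\<not> p dvd [:a:]"
  proof
    assume "p dvd [:a:]"
    with aQ(1) have "degree p = 0" using dvd_imp_degree_le[of p "[:a:]"] by simp
    moreover have "p \<noteq> 0" using p(1) by auto
    ultimately show False using degree_pos_if_ipoly_root[OF _ p(2)] by simp
  qed
  moreover have "prime_elem p" using p(1) by (simp add: prime_elem_iff_irreducible)
  ultimately show ?thesis using prime_elem_dvd_multD by blast
qed

lemma irreducible_root_poly_exists:
  assumes "algebraic x"
  shows "\<exists>p. irreducible p \<and> lead_coeff p > 0 \<and> ipoly p x = 0"
proof -
  obtain f where f: "f \<noteq> 0" "ipoly f x = 0"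
    using assms by (elim algebraicE') auto
  obtain A where A: "\<And>p. p \<in># A \<Longrightarrow> prime p" "normalize (prod_mset A) = normalize f"
    using prime_factorization_exists'[OF f(1)] by blast
  have "ipoly (normalize (prod_mset A)) x = 0"
    using f(2) by (simp only: A(2) ipoly_normalize_eq_0_iff)
  then have "ipoly (prod_mset A) x = 0"
    by (simp only: ipoly_normalize_eq_0_iff)
  then obtain p where p: "p \<in># A" "ipoly p x = 0"
    by (auto simp: ipoly_prod_mset_eq_0_iff)
  with A(1) have "prime p" by blast
  then have "irreducible p" "p \<noteq> 0" "normalize p = p"
    by (simp_all add: prime_elem_imp_irreducible prime_imp_prime_elem normalize_prime)
  then have "lead_coeff p > 0"
    using normalize_int_poly_eq_self_iff by blast
  with \<open>irreducible p\<close> p(2) show ?thesis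
    by (intro exI[of _ p] conjI)
qed

lemma min_int_poly_eqI:
  assumes "algebraic x" "irreducible p" "lead_coeff p > 0" "ipoly p x = 0"
  shows "min_int_poly x = p"
proof -
  have uniq: "q = p" if q: "irreducible q" "lead_coeff q > 0" "ipoly q x = 0" for q
  proof (rule associated_eqI)
    show "q dvd p" by (rule irreducible_dvd_if_common_root[OF assms(1) q(1,3) assms(4)])
    show "p dvd q" by (rule irreducible_dvd_if_common_root[OF assms(1,2,4) q(3)])
    show "normalize q = q" using q(2) normalize_int_poly_eq_self_iff by blast
    show "normalize p = p" using assms(3) normalize_int_poly_eq_self_iff by blast
  qed
  show ?thesis
    unfolding min_int_poly_def
  proof (rule the_equality)
    show "irreducible p \<and> lead_coeff p > 0 \<and> ipoly p x = 0" using assms(2-4) by blast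
  qed (use uniq in blast)
qed

lemma min_int_poly:
  assumes "algebraic x"
  shows "irreducible (min_int_poly x)" "lead_coeff (min_int_poly x) > 0"
    "ipoly (min_int_poly x) x = 0"
  using irreducible_root_poly_exists[OF assms] min_int_poly_eqI[OF assms] by auto

lemma irreducible_coeff_0_neq_0:
  assumes "irreducible f" "ipoly f x = 0" "x \<noteq> 0"
  shows "coeff f 0 \<noteq> 0"
proof
  assume "coeff f 0 = 0"
  then obtain g where g: "f = pCons 0 g"
    by (metis pCons_cases coeff_pCons_0)
  then have "f = [:0, 1:] * g" by simp
  from irreducibleD[OF assms(1) this] have "is_unit [:0, 1::int:] \<or> is_unit g" .
  then obtain u where "g = [:u:]" "u \<noteq> 0"
    by (auto simp: is_unit_poly_iff)
  with g assms(2,3) show False by simp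
qed

lemma degree_min_int_poly_pos:
  assumes "algebraic x"
  shows "degree (min_int_poly x) \<ge> 1"
  using min_int_poly[OF assms] degree_pos_if_ipoly_root[of "min_int_poly x" x] by auto

lemma coeff_0_min_int_poly_neq_0:
  assumes "algebraic x" "x \<noteq> 0"
  shows "coeff (min_int_poly x) 0 \<noteq> 0"
  using irreducible_coeff_0_neq_0 min_int_poly[OF assms(1)] assms(2) by blast

lemma ipoly_reflect_poly_inverse:
  assumes "x \<noteq> 0" "ipoly f x = 0"
  shows "ipoly (reflect_poly f) (inverse x) = 0"
proof -
  have "map_poly of_int (reflect_poly f) = (reflect_poly (map_poly of_int f) :: complex poly)"
    by (rule poly_eqI) (simp add: coeff_reflect_poly coeff_map_poly of_int_hom.degree_map_poly_hom)
  then have "ipoly (reflect_poly f) (inverse x) = inverse x ^ degree (map_poly of_int f :: complex poly) * ipoly f x"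
    using assms(1) by (simp add: poly_reflect_poly_nz)
  with assms(2) show ?thesis by simp
qed

section \<open>Bounds for the Mahler measure\<close>

lemma mahler_poly_ge_abs_lead_coeff: "\<bar>real_of_int (lead_coeff f)\<bar> \<le> mahler_poly f"
proof -
  have "1 \<le> (\<Prod>z\<in>{z. ipoly f z = 0}. max 1 (cmod z) ^ order z (map_poly of_int f :: complex poly))"
    by (intro prod_ge_1 one_le_power) auto
  then show ?thesis
    unfolding mahler_poly_def by (simp add: mult_le_cancel_left1)
qed

lemma mahler_poly_ge_abs_coeff_0:
  assumes "f \<noteq> 0"
  shows "\<bar>real_of_int (coeff f 0)\<bar> \<le> mahler_poly f"
proof -
  define F :: "complex poly" where "F = map_poly of_int f"
  define Z where "Z = {z. poly F z = 0}"
  have "poly F 0 = poly (Polynomial.smult (lead_coeff F) (\<Prod>z\<in>Z. [:-z, 1:] ^ order z F)) 0"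
    unfolding Z_def by (subst complex_poly_decompose) simp
  then have "cmod (poly F 0) = cmod (lead_coeff F) * (\<Prod>z\<in>Z. cmod z ^ order z F)"
    by (simp add: poly_prod norm_mult prod_norm[symmetric] norm_power)
  then have "\<bar>real_of_int (coeff f 0)\<bar> = \<bar>real_of_int (lead_coeff f)\<bar> * (\<Prod>z\<in>Z. cmod z ^ order z F)"
    by (simp add: F_def poly_0_coeff_0 flip: of_int_abs)
  also have "\<dots> \<le> \<bar>real_of_int (lead_coeff f)\<bar> * (\<Prod>z\<in>Z. max 1 (cmod z) ^ order z F)"
    by (intro mult_left_mono prod_mono power_mono conjI) auto
  also have "\<dots> = mahler_poly f"
    unfolding mahler_poly_def F_def Z_def by simp
  finally show ?thesis .
qed

lemma mahler_of_int_div: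
  fixes a b :: int
  assumes b: "b > 0" and "coprime a b"
  shows "mahler (of_int a / of_int b) = max \<bar>real_of_int a\<bar> (real_of_int b)"
proof -
  define x :: complex where "x = of_int a / of_int b"
  have "min_int_poly x = [:-a, b:]"
  proof (rule min_int_poly_eqI)
    show "algebraic x" unfolding x_def by (intro rat_imp_algebraic) simp
    show "irreducible [:-a, b:]" using assms by (intro irreducible_linear_poly) auto
  qed (use b in \<open>auto simp: x_def\<close>)
  moreover have b_nz: "(of_int b :: complex) \<noteq> 0" using b by simp
  then have lin: "(map_poly of_int [:-a, b:] :: complex poly) = Polynomial.smult (of_int b) ([:-x, 1:] ^ 1)"
    by (simp add: x_def)
  then have "{z. poly (map_poly of_int [:-a, b:]) z = 0} = {x}"
    using b_nz by auto
  moreover have "order x (map_poly of_int [:-a, b:] :: complex poly) = 1"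
    unfolding lin by (subst order_smult[OF b_nz], rule order_power_n_n)
  ultimately have "mahler x = real_of_int b * max 1 (cmod x)"
    using b by (simp add: mahler_def mahler_poly_def)
  also have "cmod x = \<bar>real_of_int a\<bar> / real_of_int b"
    using b by (simp add: x_def norm_divide)
  finally show ?thesis
    using b by (simp add: x_def max_def field_simps)
qed

lemma mahler_minus_1: "mahler (-1) = 1"
proof -
  have "mahler (of_int (-1) / of_int 1) = 1"
    by (subst mahler_of_int_div) auto
  then show ?thesis by simp
qed

lemma mahler_of_prime:
  assumes "prime p"
  shows "mahler (of_nat p) = real p" "mahler (inverse (of_nat p)) = real p"
  using mahler_of_int_div[of "int p" 1] mahler_of_int_div[of 1 "int p"] prime_gt_0_nat[OF assms]
  by (simp_all add: divide_inverse)

section \<open>Algebraic integers as eigenvalues of integer matrices\<close>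

text \<open>Matrix and eigenvector are given as functions on the index range \<open>{..<m}\<close>, which keeps
  the Kronecker product in \<open>int_matrix_eigenvalue_mult\<close> elementary.\<close>
definition int_matrix_eigenvalue :: "complex \<Rightarrow> bool" where
  "int_matrix_eigenvalue l \<longleftrightarrow> (\<exists>m (A :: nat \<Rightarrow> nat \<Rightarrow> int) (w :: nat \<Rightarrow> complex).
     (\<exists>i<m. w i \<noteq> 0) \<and> (\<forall>i<m. l * w i = (\<Sum>t<m. of_int (A i t) * w t)))"

lemma int_matrix_eigenvalue_imp_algebraic_int:
  assumes "int_matrix_eigenvalue l"
  shows "algebraic_int l"
proof -
  obtain m :: nat and A w where nz: "\<exists>i<m. w i \<noteq> 0"
    and eq: "\<forall>i<m. l * w i = (\<Sum>t<m. of_int (A i t) * w t)"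
    using assms unfolding int_matrix_eigenvalue_def by blast
  define M :: "int mat" where "M = mat m m (\<lambda>(i, t). A i t)"
  define v :: "complex vec" where "v = vec m w"
  have M: "M \<in> carrier_mat m m" and M': "(map_mat of_int M :: complex mat) \<in> carrier_mat m m"
    by (simp_all add: M_def)
  have "map_mat of_int M *\<^sub>v v = l \<cdot>\<^sub>v v"
  proof (rule eq_vecI)
    fix i assume "i < dim_vec (l \<cdot>\<^sub>v v)"
    then have i: "i < m" by (simp add: v_def)
    have "(map_mat of_int M *\<^sub>v v) $ i = (\<Sum>t<m. of_int (A i t) * w t)"
      using i by (simp add: M_def v_def mult_mat_vec_def scalar_prod_def lessThan_atLeast0)
    also have "\<dots> = (l \<cdot>\<^sub>v v) $ i" using eq i by (simp add: v_def)
    finally show "(map_mat of_int M *\<^sub>v v) $ i = (l \<cdot>\<^sub>v v) $ i" .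
  qed (simp add: M_def v_def)
  moreover have "v \<noteq> 0\<^sub>v m" and "v \<in> carrier_vec m"
    using nz by (auto simp: v_def vec_eq_iff)
  ultimately have "eigenvalue (map_mat of_int M) l"
    unfolding eigenvalue_def eigenvector_def using M' by blast
  then have "poly (char_poly (map_mat of_int M)) l = 0"
    using eigenvalue_root_char_poly[OF M'] by simp
  then have "ipoly (char_poly M) l = 0"
    by (metis of_int_hom.char_poly_hom[OF M])
  moreover have "lead_coeff (char_poly M) = 1"
    using degree_monic_char_poly[OF M] by simp
  ultimately show ?thesis unfolding algebraic_int_altdef_ipoly by blast
qed

lemma sum_lessThan_mult_div_mod:
  fixes f :: "nat \<Rightarrow> nat \<Rightarrow> 'a::comm_monoid_add"
  shows "(\<Sum>k<m * n. f (k div n) (k mod n)) = (\<Sum>i<m. \<Sum>j<n. f i j)"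
proof (induction m)
  case (Suc m)
  have "{..<Suc m * n} = {..<m * n} \<union> {m * n..<m * n + n}" by auto
  then have "(\<Sum>k<Suc m * n. f (k div n) (k mod n))
      = (\<Sum>k<m * n. f (k div n) (k mod n)) + (\<Sum>k\<in>{m * n..<m * n + n}. f (k div n) (k mod n))"
    by (simp add: sum.union_disjoint ivl_disj_int)
  also have "(\<Sum>k\<in>{m * n..<m * n + n}. f (k div n) (k mod n)) = (\<Sum>j<n. f m j)"
  proof -
    have "(\<Sum>k\<in>{m * n..<m * n + n}. f (k div n) (k mod n))
        = (\<Sum>j<n. f ((m * n + j) div n) ((m * n + j) mod n))"
      by (rule sum.reindex_bij_witness[of _ "\<lambda>j. m * n + j" "\<lambda>k. k - m * n"]) auto
    also have "\<dots> = (\<Sum>j<n. f m j)"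
      by (intro sum.cong) auto
    finally show ?thesis .
  qed
  finally show ?case using Suc by simp
qed simp

lemma int_matrix_eigenvalue_1: "int_matrix_eigenvalue 1"
  unfolding int_matrix_eigenvalue_def
  by (rule exI[of _ 1], rule exI[of _ "\<lambda>_ _. 1"], rule exI[of _ "\<lambda>_. 1"]) auto

lemma int_matrix_eigenvalue_mult:
  assumes "int_matrix_eigenvalue a" "int_matrix_eigenvalue b"
  shows "int_matrix_eigenvalue (a * b)"
proof -
  obtain m :: nat and A w i0 where i0: "i0 < m" "w i0 \<noteq> 0"
    and eqA: "\<forall>i<m. a * w i = (\<Sum>t<m. of_int (A i t) * w t)"
    using assms(1) unfolding int_matrix_eigenvalue_def by blast
  obtain n :: nat and B u j0 where j0: "j0 < n" "u j0 \<noteq> 0"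
    and eqB: "\<forall>j<n. b * u j = (\<Sum>s<n. of_int (B j s) * u s)"
    using assms(2) unfolding int_matrix_eigenvalue_def by blast
  define C where "C k k' = A (k div n) (k' div n) * B (k mod n) (k' mod n)" for k k'
  define z where "z k = w (k div n) * u (k mod n)" for k
  have "i0 * n + j0 < Suc i0 * n"
    using j0(1) by simp
  also have "\<dots> \<le> m * n"
    using i0(1) by (intro mult_right_mono) auto
  finally have "i0 * n + j0 < m * n" .
  moreover have "z (i0 * n + j0) \<noteq> 0" using i0 j0 by (simp add: z_def)
  moreover have "a * b * z k = (\<Sum>k'<m * n. of_int (C k k') * z k')" if k: "k < m * n" for k
  proof -
    have "n > 0" using k by (cases n) auto
    then have i: "k div n < m" and j: "k mod n < n"
      using k by (simp_all add: div_less_iff_less_mult)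
    have "a * b * z k = (a * w (k div n)) * (b * u (k mod n))"
      by (simp add: z_def algebra_simps)
    also have "\<dots> = (\<Sum>t<m. \<Sum>s<n. of_int (A (k div n) t) * w t * (of_int (B (k mod n) s) * u s))"
      using eqA i eqB j by (simp add: sum_product)
    also have "\<dots> = (\<Sum>k'<m * n. of_int (C k k') * z k')"
      unfolding sum_lessThan_mult_div_mod[symmetric] C_def z_def
      by (intro sum.cong) (auto simp: algebra_simps)
    finally show ?thesis .
  qed
  ultimately show ?thesis
    unfolding int_matrix_eigenvalue_def by blast
qed

lemma int_matrix_eigenvalue_lead_coeff_mult_root:
  assumes "degree f \<ge> 1" and root: "ipoly f x = 0"
  shows "int_matrix_eigenvalue (of_int (lead_coeff f) * x)"
proof -
  define m where "m = degree f"
  \<comment> \<open>\<open>A\<close> is the companion matrix of \<open>f\<close> scaled by its leading coefficient;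
    the powers \<open>x ^ i\<close>, \<open>i < m\<close>, form an eigenvector.\<close>
  define A where "A i t = (if Suc i < m then (if t = Suc i then lead_coeff f else 0) else - coeff f t)"
    for i t
  have "of_int (lead_coeff f) * x * x ^ i = (\<Sum>t<m. of_int (A i t) * x ^ t)" if i: "i < m" for i
  proof (cases "Suc i < m")
    case True
    have "(\<Sum>t<m. of_int (A i t) * x ^ t) = (\<Sum>t<m. if t = Suc i then of_int (lead_coeff f) * x ^ t else 0)"
      by (intro sum.cong) (auto simp: A_def True)
    also have "\<dots> = of_int (lead_coeff f) * x ^ Suc i" using True by simp
    finally show ?thesis by simp
  next
    case False
    with i have m: "m = Suc i" by simp
    have "0 = (\<Sum>t\<le>m. of_int (coeff f t) * x ^ t)"
      using root by (simp add: m_def poly_altdef coeff_map_poly of_int_hom.degree_map_poly_hom)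
    also have "\<dots> = (\<Sum>t<m. of_int (coeff f t) * x ^ t) + of_int (lead_coeff f) * x ^ m"
      by (simp add: m_def lessThan_Suc_atMost[symmetric])
    finally have "of_int (lead_coeff f) * x ^ m = - (\<Sum>t<m. of_int (coeff f t) * x ^ t)"
      by (metis add.commute eq_neg_iff_add_eq_0)
    also have "\<dots> = (\<Sum>t<m. of_int (A i t) * x ^ t)"
      by (simp add: A_def False sum_negf)
    finally show ?thesis by (simp add: m mult.assoc)
  qed
  moreover have "\<exists>i<m. x ^ i \<noteq> 0" using assms(1) by (intro exI[of _ 0]) (auto simp: m_def)
  ultimately show ?thesis
    unfolding int_matrix_eigenvalue_def
    by (intro exI[of _ m] exI[of _ A] exI[of _ "\<lambda>i. x ^ i"]) (auto simp: mult.assoc)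
qed

lemma int_matrix_eigenvalue_prod_lead_coeffs:
  assumes "\<And>y. y \<in> set ys \<Longrightarrow> degree (f y) \<ge> 1 \<and> ipoly (f y) y = 0"
  shows "int_matrix_eigenvalue (of_int (\<Prod>y\<leftarrow>ys. lead_coeff (f y)) * prod_list ys)"
  using assms
proof (induction ys)
  case (Cons y ys)
  have "int_matrix_eigenvalue ((of_int (lead_coeff (f y)) * y) *
      (of_int (\<Prod>y\<leftarrow>ys. lead_coeff (f y)) * prod_list ys))"
    using Cons by (intro int_matrix_eigenvalue_mult[OF int_matrix_eigenvalue_lead_coeff_mult_root]) auto
  then show ?case by (simp add: algebra_simps)
qed (simp add: int_matrix_eigenvalue_1)

lemma denominator_dvd_prod_lead_coeffs:
  fixes a b :: int
  assumes "\<And>y. y \<in> set ys \<Longrightarrow> degree (f y) \<ge> 1 \<and> ipoly (f y) y = 0"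
    and prod: "prod_list ys = of_int a / of_int b" and "b \<noteq> 0" "coprime a b"
  shows "b dvd (\<Prod>y\<leftarrow>ys. lead_coeff (f y))"
proof -
  define K where "K = (\<Prod>y\<leftarrow>ys. lead_coeff (f y))"
  have "int_matrix_eigenvalue (of_int K * prod_list ys)"
    unfolding K_def using assms(1) by (rule int_matrix_eigenvalue_prod_lead_coeffs)
  then have "algebraic_int (of_int K * (of_int a / of_int b) :: complex)"
    by (simp only: prod int_matrix_eigenvalue_imp_algebraic_int)
  moreover have "(of_int K * (of_int a / of_int b) :: complex) = of_rat (of_int K * (of_int a / of_int b))"
    by (simp add: of_rat_mult of_rat_divide)
  ultimately have "(of_int K * (of_int a / of_int b) :: complex) \<in> \<int>"
    by (metis Rats_of_rat rational_algebraic_int_is_int)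
  then obtain n where "(of_int K * (of_int a / of_int b) :: complex) = of_int n"
    by (elim Ints_cases)
  then have "(of_int (K * a) :: complex) = of_int (n * b)"
    using \<open>b \<noteq> 0\<close> by (simp add: field_simps)
  then have "b dvd K * a" by (simp only: of_int_eq_iff) simp
  then show ?thesis
    using \<open>coprime a b\<close> by (simp add: K_def coprime_commute coprime_dvd_mult_left_iff)
qed

lemma numerator_dvd_prod_coeff_0:
  fixes a b :: int
  assumes xs: "\<And>x. x \<in> set xs \<Longrightarrow> algebraic x \<and> x \<noteq> 0"
    and prod: "prod_list xs = of_int a / of_int b" and "coprime a b"
  shows "a dvd (\<Prod>x\<leftarrow>xs. coeff (min_int_poly x) 0)"
proof -
  let ?f = "\<lambda>y. reflect_poly (min_int_poly (inverse y))"
  have "a \<noteq> 0" using prod xs[of 0] by (auto simp: prod_list_zero_iff)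
  have min: "degree (min_int_poly x) \<ge> 1" "coeff (min_int_poly x) 0 \<noteq> 0"
    "ipoly (min_int_poly x) x = 0" if "x \<in> set xs" for x
    using xs[OF that] degree_min_int_poly_pos coeff_0_min_int_poly_neq_0 min_int_poly(3) by blast+
  have "prod_list (map inverse xs) = inverse (prod_list xs)"
    by (induction xs) (auto simp: mult.commute)
  with prod have "prod_list (map inverse xs) = of_int b / of_int a" by simp
  then have "a dvd (\<Prod>y\<leftarrow>map inverse xs. lead_coeff (?f y))"
    using \<open>a \<noteq> 0\<close> \<open>coprime a b\<close> xs min
    by (intro denominator_dvd_prod_lead_coeffs)
      (auto simp: coprime_commute intro!: ipoly_reflect_poly_inverse)
  also have "(\<Prod>y\<leftarrow>map inverse xs. lead_coeff (?f y)) = (\<Prod>x\<leftarrow>xs. coeff (min_int_poly x) 0)"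
    using min(2) by (induction xs) (auto simp: coeff_reflect_poly)
  finally show ?thesis .
qed

section \<open>The ultrametric Mahler measure of a rational number\<close>

lemma prime_dvd_prod_list_imp_le_abs:
  fixes g :: "'a \<Rightarrow> int"
  assumes "prime p" "p dvd (\<Prod>x\<leftarrow>xs. g x)" "\<And>x. x \<in> set xs \<Longrightarrow> g x \<noteq> 0"
  shows "\<exists>x\<in>set xs. p \<le> \<bar>g x\<bar>"
proof -
  have "p dvd prod_mset (mset (map g xs))"
    using assms(2) by (simp only: prod_mset_prod_list)
  then obtain x where x: "x \<in> set xs" "p dvd g x"
    using assms(1) by (auto simp: prime_dvd_prod_mset_iff)
  then have "\<bar>p\<bar> \<le> \<bar>g x\<bar>" using assms(3) by (simp add: dvd_imp_le_int)
  with x(1) prime_gt_0_int[OF assms(1)] show ?thesis by auto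
qed

lemma prime_dvd_num_or_denom_le_mahler:
  fixes a b :: int and P :: nat
  assumes xs: "\<And>x. x \<in> set xs \<Longrightarrow> algebraic x \<and> x \<noteq> 0"
    and prod: "prod_list xs = of_int a / of_int b" and "b \<noteq> 0" "coprime a b"
    and P: "prime P" "int P dvd a \<or> int P dvd b"
  shows "\<exists>x\<in>set xs. real P \<le> mahler x"
proof -
  let ?m = min_int_poly
  have lead_coeff: "lead_coeff (?m x) \<noteq> 0" if "x \<in> set xs" for x
    using min_int_poly(2)[of x] xs[OF that] by (cases "?m x = 0") simp_all
  have coeff_0: "coeff (?m x) 0 \<noteq> 0" if "x \<in> set xs" for x
    using coeff_0_min_int_poly_neq_0 xs[OF that] by blast
  have root: "degree (?m x) \<ge> 1" "ipoly (?m x) x = 0" if "x \<in> set xs" for x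
    using xs[OF that] degree_min_int_poly_pos min_int_poly(3) by blast+
  have "prime (int P)" using P(1) by simp
  have "\<exists>x\<in>set xs. int P \<le> \<bar>lead_coeff (?m x)\<bar> \<or> int P \<le> \<bar>coeff (?m x) 0\<bar>" (is "\<exists>x\<in>_. ?bound x")
  proof (cases "int P dvd b")
    case True
    moreover have "b dvd (\<Prod>x\<leftarrow>xs. lead_coeff (?m x))"
      using root prod assms(3,4) by (intro denominator_dvd_prod_lead_coeffs) auto
    ultimately have "int P dvd (\<Prod>x\<leftarrow>xs. lead_coeff (?m x))" by (rule dvd_trans)
    from prime_dvd_prod_list_imp_le_abs[OF \<open>prime (int P)\<close> this lead_coeff]
    show ?thesis by blast
  next
    case False
    with P(2) have "int P dvd a" by blast
    moreover have "a dvd (\<Prod>x\<leftarrow>xs. coeff (?m x) 0)"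
      using xs prod assms(4) by (rule numerator_dvd_prod_coeff_0)
    ultimately have "int P dvd (\<Prod>x\<leftarrow>xs. coeff (?m x) 0)" by (rule dvd_trans)
    from prime_dvd_prod_list_imp_le_abs[OF \<open>prime (int P)\<close> this coeff_0]
    show ?thesis by blast
  qed
  then obtain x where x: "x \<in> set xs" "?bound x" ..
  have "\<bar>real_of_int (lead_coeff (?m x))\<bar> \<le> mahler x"
    unfolding mahler_def by (rule mahler_poly_ge_abs_lead_coeff)
  moreover have "\<bar>real_of_int (coeff (?m x) 0)\<bar> \<le> mahler x"
    unfolding mahler_def using lead_coeff[OF x(1)] by (intro mahler_poly_ge_abs_coeff_0) auto
  ultimately have "real P \<le> mahler x"
    using x(2) by linarith
  with x(1) show ?thesis ..
qed

lemma prime_factor_list_exists: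
  fixes n :: nat
  assumes "n > 0"
  obtains ps where "prod_list ps = n" "\<And>p. p \<in> set ps \<Longrightarrow> prime p \<and> p dvd n"
proof -
  obtain ps where ps: "mset ps = prime_factorization n" using ex_mset by blast
  then have "prod_list ps = n"
    using assms by (metis prod_mset_prime_factorization_nat prod_mset_prod_list)
  moreover have "prime p \<and> p dvd n" if "p \<in> set ps" for p
    using that by (metis ps set_mset_mset in_prime_factors_iff)
  ultimately show ?thesis using that by blast
qed

lemma factorization_into_primes_and_inverses:
  fixes a b :: int
  assumes "a \<noteq> 0" "b > 0"
  obtains xs :: "complex list" where "prod_list xs = of_int a / of_int b"
    "\<And>x. x \<in> set xs \<Longrightarrow> x = -1 \<or> (\<exists>p. prime p \<and> (int p dvd a \<or> int p dvd b) \<and>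
        (x = of_nat p \<or> x = inverse (of_nat p)))"
proof -
  obtain ps where ps: "prod_list ps = nat \<bar>a\<bar>" "\<And>p. p \<in> set ps \<Longrightarrow> prime p \<and> p dvd nat \<bar>a\<bar>"
    using prime_factor_list_exists[of "nat \<bar>a\<bar>"] assms(1) by auto
  obtain qs where qs: "prod_list qs = nat b" "\<And>p. p \<in> set qs \<Longrightarrow> prime p \<and> p dvd nat \<bar>b\<bar>"
    using prime_factor_list_exists[of "nat b"] assms(2) by auto
  define xs :: "complex list" where
    "xs = (if a < 0 then [-1] else []) @ map of_nat ps @ map (\<lambda>p. inverse (of_nat p)) qs"
  have "prod_list (map (\<lambda>p. of_nat p :: complex) ps) = of_nat (nat \<bar>a\<bar>)"
    unfolding ps(1)[symmetric] by (induction ps) auto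
  moreover have "prod_list (map (\<lambda>p. inverse (of_nat p) :: complex) qs) = inverse (of_nat (nat b))"
    unfolding qs(1)[symmetric] by (induction qs) (auto simp: mult.commute)
  ultimately have "prod_list xs = of_int a / of_int b"
    using assms by (auto simp: xs_def divide_inverse of_nat_nat)
  moreover have "x = -1 \<or> (\<exists>p. prime p \<and> (int p dvd a \<or> int p dvd b) \<and>
      (x = of_nat p \<or> x = inverse (of_nat p)))" if "x \<in> set xs" for x
    using that ps(2) qs(2) by (auto simp: xs_def split: if_splits)
  ultimately show ?thesis using that by blast
qed

lemma mahler_ultra_eqI:
  assumes lower: "\<And>xs. xs \<noteq> [] \<Longrightarrow> \<forall>x\<in>set xs. algebraic x \<and> x \<noteq> 0 \<Longrightarrow> prod_list xs = a \<Longrightarrow>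
      c \<le> Max (mahler ` set xs)"
    and witness: "xs \<noteq> []" "\<forall>x\<in>set xs. algebraic x \<and> x \<noteq> 0" "prod_list xs = a"
      "Max (mahler ` set xs) \<le> c"
  shows "mahler_ultra a = c"
  unfolding mahler_ultra_def
proof (rule cInf_eq_minimum)
  have "c = Max (mahler ` set xs)"
    using lower[OF witness(1-3)] witness(4) by (rule antisym)
  with witness(1-3) show "c \<in> {Max (mahler ` set xs) |xs. xs \<noteq> [] \<and> (\<forall>x\<in>set xs. algebraic x \<and> x \<noteq> 0) \<and> prod_list xs = a}"
    by blast
qed (use lower in blast)

lemma prime_divisors_pair_eq:
  fixes a b :: int
  shows "{p::nat. prime p \<and> (int p dvd a \<or> int p dvd b)} = {p. prime p \<and> p dvd nat \<bar>a * b\<bar>}"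
  by (auto simp: prime_dvd_mult_iff)

lemma finite_prime_divisors_pair:
  fixes a b :: int
  assumes "a \<noteq> 0" "b \<noteq> 0"
  shows "finite {p::nat. prime p \<and> (int p dvd a \<or> int p dvd b)}"
proof (rule finite_subset)
  show "{p::nat. prime p \<and> (int p dvd a \<or> int p dvd b)} \<subseteq> {p. p dvd nat \<bar>a * b\<bar>}"
    by (auto simp: prime_divisors_pair_eq)
  show "finite {p. p dvd nat \<bar>a * b\<bar>}"
    using assms by (intro finite_divisors_nat) simp
qed

lemma prime_divisors_pair_nonempty:
  fixes a b :: int
  assumes "a \<noteq> 0" "b \<noteq> 0" "\<not> (\<bar>a\<bar> = 1 \<and> \<bar>b\<bar> = 1)"
  shows "{p::nat. prime p \<and> (int p dvd a \<or> int p dvd b)} \<noteq> {}"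
proof -
  have "nat \<bar>a * b\<bar> \<noteq> 1"
    using assms by (auto simp: abs_mult nat_mult_distrib zmult_eq_1_iff)
  then obtain p where "prime p" "p dvd nat \<bar>a * b\<bar>"
    using prime_factor_nat by blast
  then show ?thesis by (auto simp: prime_divisors_pair_eq)
qed

theorem mahler_ultra_of_int_div:
  fixes a b :: int
  assumes "a \<noteq> 0" "b > 0" "coprime a b" "\<not> (\<bar>a\<bar> = 1 \<and> b = 1)"
  shows "mahler_ultra (of_int a / of_int b) =
    real (Max {p::nat. prime p \<and> (int p dvd a \<or> int p dvd b)})"
proof -
  define S where "S = {p::nat. prime p \<and> (int p dvd a \<or> int p dvd b)}"
  have "finite S" "S \<noteq> {}"
    using assms finite_prime_divisors_pair[of a b] prime_divisors_pair_nonempty[of a b]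
    by (simp_all add: S_def)
  then have P: "prime (Max S)" "int (Max S) dvd a \<or> int (Max S) dvd b" "\<And>p. p \<in> S \<Longrightarrow> p \<le> Max S"
    using Max_in[of S] by (auto simp: S_def)
  obtain xs :: "complex list" where xs: "prod_list xs = of_int a / of_int b"
    "\<And>x. x \<in> set xs \<Longrightarrow> x = -1 \<or> (\<exists>p. prime p \<and> (int p dvd a \<or> int p dvd b) \<and>
        (x = of_nat p \<or> x = inverse (of_nat p)))"
    using factorization_into_primes_and_inverses[OF assms(1,2)] by blast
  have xs_ne: "xs \<noteq> []"
    using xs(1) assms(2,3,4) by (auto simp: divide_eq_1_iff)
  have mahler_xs: "algebraic x \<and> x \<noteq> 0 \<and> mahler x \<le> real (Max S)" if "x \<in> set xs" for x
    using xs(2)[OF that]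
  proof (elim disjE exE)
    assume "x = -1"
    with P(1) prime_ge_1_nat show ?thesis
      by (auto simp: mahler_minus_1 intro: rat_imp_algebraic)
  next
    fix p assume p: "prime p \<and> (int p dvd a \<or> int p dvd b) \<and> (x = of_nat p \<or> x = inverse (of_nat p))"
    with P(3) have "p \<le> Max S" by (simp add: S_def)
    with p prime_gt_0_nat[of p] show ?thesis
      by (auto simp: mahler_of_prime intro: rat_imp_algebraic)
  qed
  show ?thesis
    unfolding S_def[symmetric]
  proof (rule mahler_ultra_eqI)
    show "real (Max S) \<le> Max (mahler ` set ys)"
      if ys: "ys \<noteq> []" "\<forall>x\<in>set ys. algebraic x \<and> x \<noteq> 0" "prod_list ys = of_int a / of_int b"
      for ys
    proof -
      obtain x where "x \<in> set ys" "real (Max S) \<le> mahler x"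
        using prime_dvd_num_or_denom_le_mahler[of ys a b "Max S"] ys(2,3) assms(2,3) P(1,2) by auto
      moreover have "mahler x \<le> Max (mahler ` set ys)"
        using \<open>x \<in> set ys\<close> by (intro Max_ge) auto
      ultimately show ?thesis by linarith
    qed
    show "Max (mahler ` set xs) \<le> real (Max S)"
      using xs_ne mahler_xs by (simp add: Max_le_iff)
  qed (use xs(1) xs_ne mahler_xs in auto)
qed

theorem mainTheorem3:
  fixes q :: rat
  assumes "q \<noteq> 0" and "q \<noteq> 1" and "q \<noteq> -1"
  shows "mahler_ultra (of_rat q) =
    real (Max {p::nat. prime p \<and> (int p dvd fst (quotient_of q) \<or> int p dvd snd (quotient_of q))})"
proof -
  obtain a b where ab: "quotient_of q = (a, b)" by fastforce
  have q: "q = of_int a / of_int b" and "b > 0" "coprime a b"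
    using quotient_of_div quotient_of_denom_pos quotient_of_coprime ab by blast+
  have "a \<noteq> 0" "\<not> (\<bar>a\<bar> = 1 \<and> b = 1)"
    using assms q by auto
  moreover have "of_rat q = (of_int a / of_int b :: complex)"
    by (simp add: q of_rat_divide)
  ultimately show ?thesis
    using mahler_ultra_of_int_div \<open>b > 0\<close> \<open>coprime a b\<close> by (simp add: ab)
qed

end
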